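(* For every positive integer $n$, $$\sum_{j=1}^{n}\csc^6\left(\frac{(2j-1)\pi}{4n+2}\right) = \frac{8(n+1)n(8n^4+16n^3+19n^2+11n+6)}{15}.$$ *)

theory Defs
  imports Complex_Main
begin

definition csc :: "real \<Rightarrow> real" where
  "csc x = 1 / sin x"

end

theory Submission
  imports Defs "HOL-Computational_Algebra.Polynomial"
begin

text \<open>Write \<open>\<theta>\<^sub>j = (2j - 1)\<pi> / (4n + 2)\<close>. There is a polynomial \<open>Q\<^sub>n\<close> of degree at most \<open>n\<close>
  with constant term 1 such that \<open>cos ((2n + 1) x) = cos x \<cdot> Q\<^sub>n (sin\<^sup>2 x)\<close>. The \<open>n\<close> distinct
  numbers \<open>sin\<^sup>2 \<theta>\<^sub>j\<close> are roots of \<open>Q\<^sub>n\<close>, so \<open>Q\<^sub>n(y) = \<Prod>\<^sub>j (1 - y csc\<^sup>2 \<theta>\<^sub>j)\<close>, and the sum of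
  the cubes of the \<open>csc\<^sup>2 \<theta>\<^sub>j\<close> follows from the coefficients of \<open>y\<close>, \<open>y\<^sup>2\<close>, \<open>y\<^sup>3\<close> in \<open>Q\<^sub>n\<close> by
  Newton's identities. These coefficients are polynomials in \<open>n\<close>, computed from the
  three-term recurrence of \<open>Q\<^sub>n\<close>.\<close>

fun cos_odd_poly :: "nat \<Rightarrow> real poly" where
  "cos_odd_poly 0 = 1"
| "cos_odd_poly (Suc 0) = [:1, -4:]"
| "cos_odd_poly (Suc (Suc n)) = [:2, -4:] * cos_odd_poly (Suc n) - cos_odd_poly n"

lemma cos_odd_poly_eq:
  "cos ((2 * real n + 1) * x) = cos x * poly (cos_odd_poly n) (sin x ^ 2)"
proof (induction n rule: cos_odd_poly.induct)
  case 1
  then show ?case by simp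
next
  case 2
  have "poly (cos_odd_poly 1) (sin x ^ 2) = 4 * cos x ^ 2 - 3"
    using sin_squared_eq[of x] by simp
  moreover have "cos (3 * x) = cos x * (4 * cos x ^ 2 - 3)"
    using cos_treble_cos[of x] by (simp add: power3_eq_cube power2_eq_square algebra_simps)
  ultimately show ?case
    by simp
next
  case (3 n)
  let ?a = "(2 * real (Suc n) + 1) * x"
  have "(2 * real (Suc (Suc n)) + 1) * x = ?a + 2 * x" "(2 * real n + 1) * x = ?a - 2 * x"
    by (simp_all add: algebra_simps)
  moreover have "cos (?a + 2 * x) = 2 * cos (2 * x) * cos ?a - cos (?a - 2 * x)"
    by (simp add: cos_add cos_diff)
  ultimately have "cos ((2 * real (Suc (Suc n)) + 1) * x)
      = 2 * (1 - 2 * sin x ^ 2) * cos ?a - cos ((2 * real n + 1) * x)"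
    by (simp add: cos_double_sin)
  then show ?case
    using 3 by (simp add: mult_pCons_left algebra_simps)
qed

lemma degree_cos_odd_poly: "degree (cos_odd_poly n) \<le> n"
proof (induction n rule: cos_odd_poly.induct)
  case (3 n)
  have "degree ([:2, -4:] * cos_odd_poly (Suc n)) \<le> Suc (Suc n)"
    using degree_mult_le[of "[:2, -4:]" "cos_odd_poly (Suc n)"] 3(1) by simp
  moreover have "degree (cos_odd_poly n) \<le> Suc (Suc n)"
    using 3(2) by simp
  ultimately show ?case
    using degree_diff_le by (metis cos_odd_poly.simps(3))
qed auto

lemma coeff_cos_odd_poly_Suc_Suc:
  "coeff (cos_odd_poly (Suc (Suc n))) (Suc k)
     = 2 * coeff (cos_odd_poly (Suc n)) (Suc k) - 4 * coeff (cos_odd_poly (Suc n)) k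
       - coeff (cos_odd_poly n) (Suc k)"
  by (simp add: mult_pCons_left)

lemma coeff_0_cos_odd_poly: "coeff (cos_odd_poly n) 0 = 1"
  by (induction n rule: cos_odd_poly.induct) (auto simp: mult_pCons_left)

lemma coeff_1_cos_odd_poly: "coeff (cos_odd_poly n) 1 = - 2 * real n - 2 * real n ^ 2"
proof (induction n rule: cos_odd_poly.induct)
  case (3 n)
  then show ?case
    using coeff_cos_odd_poly_Suc_Suc[of n 0]
    by (simp add: coeff_0_cos_odd_poly algebra_simps power2_eq_square)
qed auto

lemma coeff_2_cos_odd_poly:
  "coeff (cos_odd_poly n) 2 = - 4/3 * real n - 2/3 * real n ^ 2 + 4/3 * real n ^ 3 + 2/3 * real n ^ 4"
proof (induction n rule: cos_odd_poly.induct)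
  case (3 n)
  have "coeff (cos_odd_poly (Suc (Suc n))) 2 = 2 * coeff (cos_odd_poly (Suc n)) 2
      - 4 * coeff (cos_odd_poly (Suc n)) 1 - coeff (cos_odd_poly n) 2"
    using coeff_cos_odd_poly_Suc_Suc[of n 1] by (simp add: numeral_2_eq_2)
  then show ?case
    unfolding 3 coeff_1_cos_odd_poly of_nat_Suc by algebra
qed (auto simp: numeral_2_eq_2)

lemma coeff_3_cos_odd_poly:
  "coeff (cos_odd_poly n) 3 = - 16/15 * real n - 16/45 * real n ^ 2 + 4/3 * real n ^ 3
     + 4/9 * real n ^ 4 - 4/15 * real n ^ 5 - 4/45 * real n ^ 6"
proof (induction n rule: cos_odd_poly.induct)
  case (3 n)
  have "coeff (cos_odd_poly (Suc (Suc n))) 3 = 2 * coeff (cos_odd_poly (Suc n)) 3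
      - 4 * coeff (cos_odd_poly (Suc n)) 2 - coeff (cos_odd_poly n) 3"
    using coeff_cos_odd_poly_Suc_Suc[of n 2] by (simp add: numeral_3_eq_3 numeral_2_eq_2)
  then show ?case
    unfolding 3 coeff_2_cos_odd_poly of_nat_Suc by algebra
qed (auto simp: numeral_3_eq_3)

lemma newton_identities_prod_linear:
  fixes y :: "'a \<Rightarrow> 'b::comm_ring_1"
  assumes "finite K"
  defines "c \<equiv> coeff (\<Prod>k\<in>K. [:1, - y k:])"
  shows "c 0 = 1"
    and "(\<Sum>k\<in>K. y k ^ 3) = - (c 1 ^ 3) + 3 * c 1 * c 2 - 3 * c 3"
proof -
  have "c 0 = 1 \<and> (\<Sum>k\<in>K. y k) = - c 1 \<and> (\<Sum>k\<in>K. y k ^ 2) = c 1 ^ 2 - 2 * c 2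
      \<and> (\<Sum>k\<in>K. y k ^ 3) = - (c 1 ^ 3) + 3 * c 1 * c 2 - 3 * c 3"
    unfolding c_def using assms(1)
  proof (induction K rule: finite_induct)
    case empty
    then show ?case by (simp add: numeral_2_eq_2 numeral_3_eq_3)
  next
    case (insert x F)
    define b where "b = coeff (\<Prod>k\<in>F. [:1, - y k:])"
    define b' where "b' = coeff (\<Prod>k\<in>insert x F. [:1, - y k:])"
    have b'_Suc: "b' (Suc m) = b (Suc m) - y x * b m" for m
      using insert by (simp add: b_def b'_def mult_pCons_left)
    have b'_coeffs: "b' 0 = b 0" "b' 1 = b 1 - y x * b 0"
        "b' 2 = b 2 - y x * b 1" "b' 3 = b 3 - y x * b 2"
      using insert b'_Suc[of 0] b'_Suc[of 1] b'_Suc[of 2]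
      by (simp_all add: b_def b'_def mult_pCons_left eval_nat_numeral)
    have IH: "b 0 = 1" "(\<Sum>k\<in>F. y k) = - b 1" "(\<Sum>k\<in>F. y k ^ 2) = b 1 ^ 2 - 2 * b 2"
      "(\<Sum>k\<in>F. y k ^ 3) = - (b 1 ^ 3) + 3 * b 1 * b 2 - 3 * b 3"
      using insert.IH by (simp_all add: b_def)
    have sums_insert: "(\<Sum>k\<in>insert x F. y k) = y x + (\<Sum>k\<in>F. y k)"
      "(\<Sum>k\<in>insert x F. y k ^ m) = y x ^ m + (\<Sum>k\<in>F. y k ^ m)" for m
      using insert by simp_all
    show ?case
      unfolding b'_def[symmetric] sums_insert IH b'_coeffs
      by (simp add: algebra_simps power2_eq_square power3_eq_cube)
  qed
  then show "c 0 = 1" "(\<Sum>k\<in>K. y k ^ 3) = - (c 1 ^ 3) + 3 * c 1 * c 2 - 3 * c 3"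
    by blast+
qed

lemma poly_eq_prod_reciprocal_roots:
  fixes p :: "'a::field poly"
  assumes "finite K" "inj_on r K" "degree p \<le> card K" "coeff p 0 = 1"
    and "\<And>k. k \<in> K \<Longrightarrow> r k \<noteq> 0" "\<And>k. k \<in> K \<Longrightarrow> poly p (r k) = 0"
  shows "p = (\<Prod>k\<in>K. [:1, - inverse (r k):])"
proof (rule poly_eqI_degree[where A = "insert 0 (r ` K)"])
  let ?q = "\<Prod>k\<in>K. [:1, - inverse (r k):]"
  fix x assume "x \<in> insert 0 (r ` K)"
  then show "poly p x = poly ?q x"
  proof
    assume "x = 0"
    have "poly p 0 = 1"
      using assms(4) by (simp add: poly_0_coeff_0)
    moreover have "poly ?q 0 = 1"
      by (simp add: poly_prod)
    ultimately show ?thesis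
      using \<open>x = 0\<close> by simp
  next
    assume "x \<in> r ` K"
    then obtain k where "k \<in> K" "x = r k" by auto
    then show ?thesis
      using assms(1,5,6) by (auto simp: poly_prod intro!: prod_zero bexI[of _ k])
  qed
next
  let ?q = "\<Prod>k\<in>K. [:1, - inverse (r k):]"
  have "0 \<notin> r ` K"
    using assms(5) by force
  then have card_roots: "card (insert 0 (r ` K)) = Suc (card K)"
    using assms(1,2) by (simp add: card_image)
  have "degree ?q \<le> (\<Sum>k\<in>K. degree [:1, - inverse (r k):])"
    by (rule degree_prod_sum_le[OF assms(1), unfolded o_def])
  also have "\<dots> \<le> (\<Sum>k\<in>K. 1)"
    by (intro sum_mono) simp
  finally show "degree p < card (insert 0 (r ` K))" "degree ?q < card (insert 0 (r ` K))"
    using assms(3) card_roots by simp_all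
qed

definition cos_odd_zero :: "nat \<Rightarrow> nat \<Rightarrow> real" where
  "cos_odd_zero n j = (2 * real j - 1) * pi / (4 * real n + 2)"

lemma cos_odd_zero_bounds:
  assumes "j \<in> {1..n}"
  shows "0 < cos_odd_zero n j" "cos_odd_zero n j < pi / 2"
proof -
  have "0 < 2 * real j - 1" "2 * real j - 1 < (4 * real n + 2) / 2"
    using assms by auto
  then have "0 < (2 * real j - 1) * pi" "(2 * real j - 1) * pi < (4 * real n + 2) / 2 * pi"
    using mult_strict_right_mono[OF _ pi_gt_zero] by simp_all
  then show "0 < cos_odd_zero n j" "cos_odd_zero n j < pi / 2"
    unfolding cos_odd_zero_def by (simp_all add: field_simps)
qed

lemma cos_odd_multiple_cos_odd_zero:
  assumes "j \<in> {1..n}"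
  shows "cos ((2 * real n + 1) * cos_odd_zero n j) = 0"
proof -
  have "(2 * real n + 1) * cos_odd_zero n j = of_int (int j - 1) * pi + pi / 2"
    unfolding cos_odd_zero_def using assms by (simp add: field_simps)
  then show ?thesis
    using cos_zero_iff_int2 by blast
qed

lemma inj_on_sin_squared_cos_odd_zero:
  "inj_on (\<lambda>j. sin (cos_odd_zero n j) ^ 2) {1..n}"
proof (rule inj_onI)
  fix i j assume i: "i \<in> {1..n}" and j: "j \<in> {1..n}"
    and "sin (cos_odd_zero n i) ^ 2 = sin (cos_odd_zero n j) ^ 2"
  moreover have "0 \<le> sin (cos_odd_zero n i)" "0 \<le> sin (cos_odd_zero n j)"
    using cos_odd_zero_bounds[OF i] cos_odd_zero_bounds[OF j] by (simp_all add: sin_ge_zero)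
  ultimately have sin_eq: "sin (cos_odd_zero n i) = sin (cos_odd_zero n j)"
    by (simp add: power2_eq_iff_nonneg)
  have "cos_odd_zero n i = cos_odd_zero n j"
    using cos_odd_zero_bounds[OF i] cos_odd_zero_bounds[OF j]
    by (intro sin_inj_pi[OF _ _ _ _ sin_eq]) linarith+
  then show "i = j"
    unfolding cos_odd_zero_def by simp
qed

theorem mainTheorem20:
  fixes n :: nat
  assumes "n \<ge> 1"
  shows "(\<Sum>j=1..n. csc ((2 * real j - 1) * pi / (4 * real n + 2)) ^ 6)
         = 8 * (real n + 1) * real n * (8 * real n ^ 4 + 16 * real n ^ 3 + 19 * real n ^ 2 + 11 * real n + 6) / 15"
proof -
  define s where "s j = sin (cos_odd_zero n j) ^ 2" for j
  have s_nonzero: "s j \<noteq> 0" if "j \<in> {1..n}" for j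
    using cos_odd_zero_bounds[OF that] sin_gt_zero[of "cos_odd_zero n j"] unfolding s_def by simp
  have "poly (cos_odd_poly n) (s j) = 0" if "j \<in> {1..n}" for j
    using cos_odd_poly_eq[of n "cos_odd_zero n j"] cos_odd_multiple_cos_odd_zero[OF that]
      cos_odd_zero_bounds[OF that] cos_gt_zero_pi[of "cos_odd_zero n j"]
    unfolding s_def by simp
  then have factorization: "cos_odd_poly n = (\<Prod>j\<in>{1..n}. [:1, - inverse (s j):])"
    using degree_cos_odd_poly[of n] coeff_0_cos_odd_poly[of n] s_nonzero
      inj_on_sin_squared_cos_odd_zero[of n, folded s_def]
    by (intro poly_eq_prod_reciprocal_roots) auto
  have "(\<Sum>j=1..n. csc ((2 * real j - 1) * pi / (4 * real n + 2)) ^ 6)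
      = (\<Sum>j=1..n. inverse (s j) ^ 3)"
    by (simp add: csc_def s_def cos_odd_zero_def inverse_eq_divide power_divide flip: power_mult)
  also have "\<dots> = - (coeff (cos_odd_poly n) 1 ^ 3)
      + 3 * coeff (cos_odd_poly n) 1 * coeff (cos_odd_poly n) 2 - 3 * coeff (cos_odd_poly n) 3"
    unfolding factorization by (rule newton_identities_prod_linear) simp
  also have "\<dots> = 8 * (real n + 1) * real n * (8 * real n ^ 4 + 16 * real n ^ 3 + 19 * real n ^ 2 + 11 * real n + 6) / 15"
    unfolding coeff_1_cos_odd_poly coeff_2_cos_odd_poly coeff_3_cos_odd_poly by algebra
  finally show ?thesis .
qed

end
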